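(* Let $T$ be the set of $(a_0,\dots,a_9)\in\mathbb{R}^{10}$ such that $P(x,a)=x^{11}-x^{10}+a_9x^9+\cdots+a_0$ satisfies $a_9,a_8,a_7,a_6<0$, $a_5,\dots,a_1>0$, $a_0<0$ and has exactly one positive and exactly eight negative roots, all simple. Suppose $T\ne\emptyset$, let $\Gamma$ be a connected component of $T$, $\bar\Gamma$ its closure, and let $H$ be the set of polynomials $P(x,a)$, $a\in\bar\Gamma$, all of whose roots are real. Then no polynomial in $H$ has exactly two distinct real roots. *)

theory Defs
  imports "HOL-Analysis.Analysis" "HOL-Computational_Algebra.Polynomial"
begin

text \<open>Points of R^10 are vectors a :: real^10; the coordinate a_j (j = 0..9) is
  a $ (of_nat j), the index type 10 being the integers modulo 10.\<close>

definition coef10 :: "real^10 \<Rightarrow> nat \<Rightarrow> real" where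
  "coef10 a j = a $ (of_nat j :: 10)"

definition Ppoly :: "real^10 \<Rightarrow> real poly" where
  "Ppoly a = monom 1 11 - monom 1 10 + (\<Sum>j<10. monom (coef10 a j) j)"

definition Tset :: "(real^10) set" where
  "Tset = {a. (\<forall>j\<in>{6..9}. coef10 a j < 0) \<and> (\<forall>j\<in>{1..5}. coef10 a j > 0) \<and> coef10 a 0 < 0
          \<and> card {x::real. x > 0 \<and> poly (Ppoly a) x = 0} = 1
          \<and> card {x::real. x < 0 \<and> poly (Ppoly a) x = 0} = 8
          \<and> (\<forall>x::real. poly (Ppoly a) x = 0 \<longrightarrow> order x (Ppoly a) = 1)}"

definition all_roots_real :: "real poly \<Rightarrow> bool" where
  "all_roots_real p \<longleftrightarrow> (\<forall>z::complex. poly (map_poly complex_of_real p) z = 0 \<longrightarrow> z \<in> \<real>)"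

end

(* On the closure of T the strict sign conditions become a_9, a_8 <= 0, a_1 >= 0, a_0 <= 0.
   A real-rooted P(x,a) with exactly two distinct roots is (x - r)^m (x - s)^n with m + n = 11.
   Comparing the coefficients of x^10, x^9, x^8, x and 1 excludes two roots of equal sign; a zero
   root leaves only x^11 - x^10; roots of opposite signs force the positive one to have odd
   multiplicity exceeding that of the negative one, i.e. (m, n) = (7, 4) or (9, 2), and then the
   coefficients of x^9 and x^8 are incompatible. Hence such a polynomial would be x^11 - x^10,
   i.e. a = 0.
   But 0 is not in the closure of T: a polynomial of T with tiny coefficients has its positive root
   near 1, its eight negative roots in [-10^-6, 0) and two non-real roots near 0. Writing it as
   (x - rho)(x^2 + p x + q) S(x), Newton-type inequalities for the coefficients of S show that the
   coefficients of x and x^5 cannot both be positive. *)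

theory Submission
  imports Defs "HOL-Computational_Algebra.Fundamental_Theorem_Algebra"
begin

section \<open>Real-rooted polynomials with two distinct roots\<close>

lemma map_poly_of_real_mult:
  "map_poly (of_real :: real \<Rightarrow> 'a :: {real_algebra_1, comm_ring_1}) (p * q)
     = map_poly of_real p * map_poly of_real q"
  by (rule poly_eqI) (simp add: coeff_map_poly coeff_mult)

lemma poly_map_poly_of_real:
  "poly (map_poly (of_real :: real \<Rightarrow> 'a :: {real_algebra_1, comm_ring_1}) p) (of_real x)
     = of_real (poly p x)"
  by (induction p) (auto simp: map_poly_pCons)

lemma all_roots_real_factor: "all_roots_real (p * q) \<Longrightarrow> all_roots_real q"
  by (simp add: all_roots_real_def map_poly_of_real_mult)

lemma all_roots_real_without_real_roots:
  assumes "all_roots_real q" "\<And>x. poly q x \<noteq> 0"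
  shows "degree q = 0"
proof -
  have "poly (map_poly complex_of_real q) z \<noteq> 0" for z
  proof
    assume root: "poly (map_poly complex_of_real q) z = 0"
    then obtain x where "z = of_real x" using assms(1) unfolding all_roots_real_def by (auto elim: Reals_cases)
    then show False using root assms(2) by (simp add: poly_map_poly_of_real)
  qed
  then have "constant (poly (map_poly complex_of_real q))"
    using fundamental_theorem_of_algebra by blast
  then have "degree (map_poly complex_of_real q) = 0" by (simp add: constant_degree)
  moreover have "q \<noteq> 0" using assms(2)[of 0] by auto
  ultimately show ?thesis by (simp add: degree_map_poly)
qed

lemma all_roots_real_two_roots:
  fixes P :: "real poly"
  assumes monic: "lead_coeff P = 1" and real: "all_roots_real P"
    and two: "card {x. poly P x = 0} = 2"
  obtains r s m n where "1 \<le> m" "1 \<le> n" "m + n = degree P" "P = [:-r, 1:] ^ m * [:-s, 1:] ^ n"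
proof -
  have P: "P \<noteq> 0" using monic by auto
  obtain r s where rs: "{x. poly P x = 0} = {r, s}" "r \<noteq> s" using two[unfolded card_2_iff] by blast
  define m n where "m = order r P" and "n = order s P"
  have "poly P r = 0" "poly P s = 0" using rs(1) by auto
  then have mn: "1 \<le> m" "1 \<le> n" using P order_root unfolding m_def n_def by (auto simp: Suc_le_eq)
  obtain P1 where P1: "P = [:-r, 1:] ^ m * P1" using order_1[of r P] unfolding m_def by (elim dvdE)
  have order_s_r: "order s ([:-r, 1:] ^ m) = 0" using rs(2) by (intro order_0I) simp
  have "order s P = order s ([:-r, 1:] ^ m) + order s P1"
    using P unfolding P1 by (rule order_mult)
  then have "n = order s P1" using order_s_r by (simp add: n_def)
  then obtain Q where Q: "P1 = [:-s, 1:] ^ n * Q" using order_1[of s P1] by (elim dvdE) simp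
  have PQ: "P = [:-r, 1:] ^ m * [:-s, 1:] ^ n * Q" unfolding P1 Q by (simp only: mult.assoc)
  have Q_nz: "Q \<noteq> 0" using P PQ by (metis mult_zero_right)
  have "poly Q x \<noteq> 0" for x
  proof
    assume Qx: "poly Q x = 0"
    then have "poly P x = 0" unfolding PQ by simp
    then have "x = r \<or> x = s" using rs(1) by auto
    moreover have "order x P = order x ([:-r, 1:] ^ m) + order x ([:-s, 1:] ^ n) + order x Q"
      using P unfolding PQ by (simp add: order_mult)
    moreover have "order x Q \<noteq> 0" using Qx Q_nz order_root by blast
    moreover have "order r ([:-s, 1:] ^ n) = 0" using rs(2) by (intro order_0I) simp
    ultimately show False using order_s_r by (auto simp: m_def n_def order_power_n_n)
  qed
  moreover have "all_roots_real Q" using real unfolding PQ by (rule all_roots_real_factor)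
  ultimately have deg: "degree Q = 0" by (intro all_roots_real_without_real_roots)
  have "lead_coeff P = lead_coeff Q" unfolding PQ by (simp add: lead_coeff_mult lead_coeff_power)
  then have "coeff Q 0 = 1" using monic deg by simp
  then have "Q = 1" using degree_0_id[OF deg] by (simp add: one_pCons)
  then have P_eq: "P = [:-r, 1:] ^ m * [:-s, 1:] ^ n" using PQ by simp
  then have "m + n = degree P" by (simp add: degree_mult_eq degree_linear_power)
  from mn this P_eq show ?thesis by (rule that)
qed

section \<open>Two-root polynomials with the boundary sign pattern\<close>

lemma coeff_linear_poly_power':
  fixes a b :: "'a :: comm_semiring_1"
  shows "coeff ([:a, b:] ^ n) i = of_nat (n choose i) * b ^ i * a ^ (n - i)"
proof (cases "i \<le> n")
  case True
  then show ?thesis by (rule coeff_linear_poly_power)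
next
  case False
  then have "degree ([:a, b:] ^ n) < i"
    using degree_power_le[of "[:a, b:]" n] degree_pCons_le[of a "[:b:]"] by (auto intro: le_less_trans)
  then show ?thesis using False by (simp add: coeff_eq_0 binomial_eq_0)
qed

lemma coeff_linear_powers_mult:
  fixes a b :: "'a :: comm_semiring_1"
  shows "coeff ([:a, 1:] ^ m * [:b, 1:] ^ n) j
    = (\<Sum>i\<le>j. of_nat (m choose i) * a ^ (m - i) * (of_nat (n choose (j - i)) * b ^ (n - (j - i))))"
  by (simp add: coeff_mult coeff_linear_poly_power')

lemma coeff_linear_powers_mult_top:
  fixes a b :: "'a :: idom"
  assumes "j \<le> m + n"
  shows "coeff ([:a, 1:] ^ m * [:b, 1:] ^ n) (m + n - j)
    = (\<Sum>i\<le>j. of_nat (m choose i) * a ^ i * (of_nat (n choose (j - i)) * b ^ (j - i)))"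
proof -
  let ?p = "[:a, 1:] ^ m * [:b, 1:] ^ n"
  have "degree ?p = m + n"
    by (simp add: degree_mult_eq degree_linear_power)
  then have "coeff ?p (m + n - j) = coeff (reflect_poly ?p) j"
    using assms by (simp add: coeff_reflect_poly)
  also have "reflect_poly ?p = [:1, a:] ^ m * [:1, b:] ^ n"
    unfolding reflect_poly_mult reflect_poly_power by (simp add: reflect_poly_def)
  finally show ?thesis by (simp add: coeff_mult coeff_linear_poly_power' mult_ac)
qed

lemma coeffs_two_root_poly:
  fixes r s :: real and m n :: nat
  assumes "m + n = 11"
  defines "P \<equiv> [:-r, 1:] ^ m * [:-s, 1:] ^ n"
  shows "coeff P 10 = - (m * r + n * s)"
    and "coeff P 9 = (m choose 2) * r\<^sup>2 + m * n * r * s + (n choose 2) * s\<^sup>2"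
    and "coeff P 8 = - ((m choose 3) * r ^ 3 + (m choose 2) * n * r\<^sup>2 * s
                        + m * (n choose 2) * r * s\<^sup>2 + (n choose 3) * s ^ 3)"
    and "coeff P 1 = (-r) ^ m * (n * (-s) ^ (n - 1)) + m * (-r) ^ (m - 1) * (-s) ^ n"
    and "coeff P 0 = (-r) ^ m * (-s) ^ n"
proof -
  have top: "coeff P (11 - j)
      = (\<Sum>i\<le>j. (m choose i) * (-r) ^ i * ((n choose (j - i)) * (-s) ^ (j - i)))" if "j \<le> 11" for j
    using coeff_linear_powers_mult_top[of j m n "-r" "-s"] that assms by simp
  show "coeff P 10 = - (m * r + n * s)"
    using top[of 1] by (simp add: algebra_simps)
  show "coeff P 9 = (m choose 2) * r\<^sup>2 + m * n * r * s + (n choose 2) * s\<^sup>2"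
    using top[of 2] by (simp add: numeral_2_eq_2 algebra_simps power2_eq_square)
  show "coeff P 8 = - ((m choose 3) * r ^ 3 + (m choose 2) * n * r\<^sup>2 * s
                        + m * (n choose 2) * r * s\<^sup>2 + (n choose 3) * s ^ 3)"
    using top[of 3]
    by (simp add: numeral_3_eq_3 numeral_2_eq_2 algebra_simps power2_eq_square power3_eq_cube)
  show "coeff P 1 = (-r) ^ m * (n * (-s) ^ (n - 1)) + m * (-r) ^ (m - 1) * (-s) ^ n"
    unfolding P_def coeff_linear_powers_mult by simp
  show "coeff P 0 = (-r) ^ m * (-s) ^ n"
    unfolding P_def coeff_linear_powers_mult by simp
qed

lemma positive_root_multiplicity_dominates:
  fixes r s :: real and m n :: nat
  assumes "r > 0" "s < 0" "m * r + n * s > 0"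
    and c0: "(-r) ^ m * (-s) ^ n \<le> 0"
    and c1: "(-r) ^ m * (n * (-s) ^ (n - 1)) + m * (-r) ^ (m - 1) * (-s) ^ n \<ge> 0"
  shows "odd m" and "n < m"
proof -
  define t where "t = -s"
  have t: "t > 0" using assms(2) by (simp add: t_def)
  show odd: "odd m"
  proof
    assume "even m"
    then have "(-r) ^ m * t ^ n > 0" using assms(1) t by (simp add: zero_less_power_eq)
    then show False using c0 by (simp add: t_def)
  qed
  then obtain k where k: "m = Suc (2 * k)" by (auto elim: oddE)
  show "n < m"
  proof (cases n)
    case 0
    then show ?thesis using k by simp
  next
    case (Suc i)
    have even_pow: "(-r) ^ (2 * k) = r ^ (2 * k)" by (simp add: power_mult)
    have "r ^ (2 * k) * t ^ i * (m * t - n * r) \<ge> 0"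
      using c1 unfolding k Suc t_def[symmetric] by (simp add: even_pow algebra_simps)
    moreover have "r ^ (2 * k) * t ^ i > 0" using assms(1) t by simp
    ultimately have "n * r \<le> m * t" by (simp add: zero_le_mult_iff)
    moreover have "n * t < m * r" using assms(3) by (simp add: t_def)
    ultimately have "(n * r) * (n * t) < (m * t) * (m * r)"
      using mult_le_less_imp_less[of "n * r" "m * t" "n * t" "m * r"] assms(1) t Suc by simp
    then have "real n * n < real m * m"
      using assms(1) t by (simp add: algebra_simps)
    then show ?thesis by (metis not_less mult_mono of_nat_0_le_iff of_nat_le_iff of_nat_mult)
  qed
qed

lemma mixed_roots_9_2_impossible:
  fixes r s :: real
  assumes "r > 0" "s < 0" "9 * r + 2 * s = 1"
    and e2: "36 * r\<^sup>2 + 18 * (r * s) + s\<^sup>2 \<le> 0"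
    and e3: "84 * r ^ 3 + 72 * (r\<^sup>2 * s) + 9 * (r * s\<^sup>2) \<ge> 0"
  shows False
proof -
  have "s + 2 * r \<le> 0"
  proof (rule ccontr)
    assume "\<not> s + 2 * r \<le> 0"
    then have "18 * r * (s + 2 * r) > 0" using assms(1) by simp
    moreover have "36 * r\<^sup>2 + 18 * (r * s) + s\<^sup>2 = s\<^sup>2 + 18 * r * (s + 2 * r)"
      by (simp add: algebra_simps power2_eq_square)
    ultimately show False using e2 by (smt (verit) zero_le_power2)
  qed
  moreover have "s + 6 * r > 0" using assms by linarith
  ultimately have "(s + 2 * r) * (s + 6 * r) \<le> 0" by (simp add: mult_nonpos_nonneg)
  moreover have "r\<^sup>2 > 0" using assms(1) by simp
  ultimately have "9 * ((s + 2 * r) * (s + 6 * r)) - 24 * r\<^sup>2 < 0" by linarith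
  then have "r * (9 * ((s + 2 * r) * (s + 6 * r)) - 24 * r\<^sup>2) < 0"
    using assms(1) by (rule mult_pos_neg[rotated])
  also have "r * (9 * ((s + 2 * r) * (s + 6 * r)) - 24 * r\<^sup>2)
      = 84 * r ^ 3 + 72 * (r\<^sup>2 * s) + 9 * (r * s\<^sup>2)"
    by (simp add: algebra_simps power2_eq_square power3_eq_cube)
  finally show False using e3 by simp
qed

lemma mixed_roots_7_4_impossible:
  fixes r s :: real
  assumes "r > 0" "s < 0" "7 * r + 4 * s = 1"
    and e2: "21 * r\<^sup>2 + 28 * (r * s) + 6 * s\<^sup>2 \<le> 0"
    and e3: "35 * r ^ 3 + 84 * (r\<^sup>2 * s) + 42 * (r * s\<^sup>2) + 4 * s ^ 3 \<ge> 0"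
  shows False
proof -
  have "10 * s + 9 * r \<le> 0"
  proof (rule ccontr)
    assume "\<not> 10 * s + 9 * r \<le> 0"
    then have "r * (1614/100 * r + 172/10 * s) > 0" using assms(1) by simp
    moreover have "21 * r\<^sup>2 + 28 * (r * s) + 6 * s\<^sup>2
        = 6 * (s + 9/10 * r)\<^sup>2 + r * (1614/100 * r + 172/10 * s)"
      by (simp add: algebra_simps power2_eq_square)
    ultimately show False using e2 by (smt (verit) zero_le_power2)
  qed
  moreover have "4 * s + 7 * r > 0" and "20 * s + 157 * r > 0" using assms by linarith+
  ultimately have "(10 * s + 9 * r) * (4 * s + 7 * r) * (20 * s + 157 * r) \<le> 0"
    by (simp add: mult_nonpos_nonneg)
  moreover have "r\<^sup>2 * (-1102 * s - 2891 * r) < 0"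
    using assms by (intro mult_pos_neg) auto
  moreover have "200 * (35 * r ^ 3 + 84 * (r\<^sup>2 * s) + 42 * (r * s\<^sup>2) + 4 * s ^ 3)
     = r\<^sup>2 * (-1102 * s - 2891 * r) + (10 * s + 9 * r) * (4 * s + 7 * r) * (20 * s + 157 * r)"
    by algebra
  ultimately show False using e3 by argo
qed

definition boundary_sign_pattern :: "real poly \<Rightarrow> bool" where
  "boundary_sign_pattern P \<longleftrightarrow>
     coeff P 10 = -1 \<and> coeff P 9 \<le> 0 \<and> coeff P 8 \<le> 0 \<and> coeff P 1 \<ge> 0 \<and> coeff P 0 \<le> 0"

lemma two_root_poly_mixed_signs_impossible:
  fixes r s :: real and m n :: nat
  assumes "m + n = 11" "1 \<le> n" "r > 0" "s < 0"
    and "boundary_sign_pattern ([:-r, 1:] ^ m * [:-s, 1:] ^ n)"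
  shows False
proof -
  note c = coeffs_two_root_poly[OF assms(1), of r s]
  have e1: "m * r + n * s = 1"
    and e2: "(m choose 2) * r\<^sup>2 + m * n * r * s + (n choose 2) * s\<^sup>2 \<le> 0"
    and e3: "(m choose 3) * r ^ 3 + (m choose 2) * n * r\<^sup>2 * s + m * (n choose 2) * r * s\<^sup>2
               + (n choose 3) * s ^ 3 \<ge> 0"
    and c1: "(-r) ^ m * (n * (-s) ^ (n - 1)) + m * (-r) ^ (m - 1) * (-s) ^ n \<ge> 0"
    and c0: "(-r) ^ m * (-s) ^ n \<le> 0"
    using assms(5) unfolding boundary_sign_pattern_def c by auto
  have "odd m" "n < m"
    using positive_root_multiplicity_dominates[OF assms(3,4) _ c0 c1] e1 by simp_all
  then have "m = 7 \<and> n = 4 \<or> m = 9 \<and> n = 2" using assms(1,2) by presburger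
  then show False
  proof (elim disjE conjE)
    assume "m = 7" "n = 4"
    moreover have "(7::nat) choose 2 = 21" "(7::nat) choose 3 = 35" "(4::nat) choose 2 = 6"
      "(4::nat) choose 3 = 4" by (simp_all add: numeral_eq_Suc)
    ultimately show False
      using mixed_roots_7_4_impossible[OF assms(3,4)] e1 e2 e3 by (simp add: algebra_simps)
  next
    assume "m = 9" "n = 2"
    moreover have "(9::nat) choose 2 = 36" "(9::nat) choose 3 = 84"
      by (simp_all add: numeral_eq_Suc)
    ultimately show False
      using mixed_roots_9_2_impossible[OF assms(3,4)] e1 e2 e3 by (simp add: binomial_eq_0 algebra_simps)
  qed
qed

lemma two_root_poly_zero_root:
  fixes r :: real and m n :: nat
  assumes "m + n = 11" "boundary_sign_pattern ([:-r, 1:] ^ m * [:0, 1:] ^ n)"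
  shows "[:-r, 1:] ^ m * [:0, 1:] ^ n = monom 1 11 - monom 1 10"
proof -
  note c = coeffs_two_root_poly[OF assms(1), of r 0, unfolded minus_zero]
  have e1: "m * r = 1" and e2: "(m choose 2) * r\<^sup>2 \<le> 0"
    using assms(2) unfolding boundary_sign_pattern_def c(1,2) by simp_all
  have "r\<^sup>2 > 0" using e1 by (cases "r = 0") simp_all
  then have "m choose 2 = 0" using e2 by (simp add: mult_le_0_iff)
  moreover have "m \<noteq> 0" using e1 by (metis mult_eq_0_iff of_nat_0 zero_neq_one)
  ultimately have "m = 1" by (simp add: binomial_eq_0_iff)
  then have "r = 1" "n = 10" using e1 assms(1) by auto
  moreover have "monom (1::real) 11 = pCons 0 (monom 1 10)"
    using monom_Suc[of "1::real" 10] by simp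
  ultimately show ?thesis using \<open>m = 1\<close>
    by (simp add: monom_altdef mult_pCons_left)
qed

lemma two_root_poly_boundary_sign_pattern:
  fixes r s :: real and m n :: nat
  assumes mn: "m + n = 11" "1 \<le> m" "1 \<le> n"
    and pattern: "boundary_sign_pattern ([:-r, 1:] ^ m * [:-s, 1:] ^ n)"
  shows "[:-r, 1:] ^ m * [:-s, 1:] ^ n = monom 1 11 - monom 1 10"
proof -
  have nm: "n + m = 11" using mn(1) by simp
  have pattern': "boundary_sign_pattern ([:-s, 1:] ^ n * [:-r, 1:] ^ m)"
    using pattern by (simp add: mult.commute)
  note c = coeffs_two_root_poly[OF mn(1), of r s]
  consider "s = 0" | "r = 0" | "r > 0" "s > 0" | "r < 0" "s < 0" | "r > 0" "s < 0" | "r < 0" "s > 0"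
    by linarith
  then show ?thesis
  proof cases
    case 1
    then show ?thesis using two_root_poly_zero_root[OF mn(1)] pattern by simp
  next
    case 2
    then show ?thesis using two_root_poly_zero_root[OF nm] pattern' by (simp add: mult.commute)
  next
    case 3
    then have "0 < real (m * n) * r * s" using mn by simp
    moreover have "0 \<le> real (m choose 2) * r\<^sup>2" "0 \<le> real (n choose 2) * s\<^sup>2" by simp_all
    moreover have "coeff ([:-r, 1:] ^ m * [:-s, 1:] ^ n) 9 \<le> 0"
      using pattern by (simp add: boundary_sign_pattern_def)
    ultimately have False unfolding c(2) by linarith
    then show ?thesis ..
  next
    case 4
    then have "real m * r < 0" "real n * s < 0" using mn by (simp_all add: mult_pos_neg)
    moreover have "coeff ([:-r, 1:] ^ m * [:-s, 1:] ^ n) 10 = -1"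
      using pattern by (simp add: boundary_sign_pattern_def)
    ultimately have False unfolding c(1) by linarith
    then show ?thesis ..
  next
    case 5
    then show ?thesis using two_root_poly_mixed_signs_impossible[OF mn(1,3)] pattern by blast
  next
    case 6
    then show ?thesis using two_root_poly_mixed_signs_impossible[OF nm mn(2)] pattern' by blast
  qed
qed

section \<open>The sign pattern on the closure of T\<close>

lemma coeff_Ppoly:
  "coeff (Ppoly a) k = (if k = 11 then 1 else if k = 10 then -1 else if k < 10 then coef10 a k else 0)"
  unfolding Ppoly_def by (simp add: coeff_monom coeff_sum)

lemma poly_Ppoly: "poly (Ppoly a) x = x ^ 11 - x ^ 10 + (\<Sum>j<10. coef10 a j * x ^ j)"
  unfolding Ppoly_def by (simp add: poly_monom poly_sum)

lemma degree_Ppoly: "degree (Ppoly a) = 11"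
proof (rule antisym)
  show "degree (Ppoly a) \<le> 11" by (rule degree_le) (simp add: coeff_Ppoly)
  show "11 \<le> degree (Ppoly a)" by (rule le_degree) (simp add: coeff_Ppoly)
qed

lemma lead_coeff_Ppoly: "lead_coeff (Ppoly a) = 1"
  by (simp add: degree_Ppoly coeff_Ppoly)

lemma Ppoly_nonzero: "Ppoly a \<noteq> 0"
  using lead_coeff_Ppoly[of a] by auto

lemma closure_Tset_boundary_sign_pattern:
  assumes "a \<in> closure Tset"
  shows "boundary_sign_pattern (Ppoly a)"
proof -
  let ?C = "{b. coef10 b 9 \<le> 0 \<and> coef10 b 8 \<le> 0 \<and> coef10 b 1 \<ge> 0 \<and> coef10 b 0 \<le> 0}"
  have "closed ?C"
    unfolding coef10_def
    by (intro closed_Collect_conj closed_halfspace_component_le_cart closed_halfspace_component_ge_cart)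
  moreover have "coef10 b 9 < 0 \<and> coef10 b 8 < 0 \<and> coef10 b 1 > 0 \<and> coef10 b 0 < 0"
    if "b \<in> Tset" for b using that unfolding Tset_def by simp
  then have "Tset \<subseteq> ?C" by fastforce
  ultimately have "closure Tset \<subseteq> ?C" by (rule closure_minimal[rotated])
  then show ?thesis using assms by (auto simp: boundary_sign_pattern_def coeff_Ppoly)
qed

section \<open>Coefficients of products of linear factors with negative roots\<close>

definition linear_factors :: "real set \<Rightarrow> real poly" where
  "linear_factors A = (\<Prod>x\<in>A. [:-x, 1:])"

lemma linear_factors_insert:
  "finite A \<Longrightarrow> x \<notin> A \<Longrightarrow> linear_factors (insert x A) = [:-x, 1:] * linear_factors A"
  by (simp add: linear_factors_def)

lemma coeff_linear_factors_insert:
  assumes "finite A" "x \<notin> A"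
  shows "coeff (linear_factors (insert x A)) k
    = (-x) * coeff (linear_factors A) k + (if k = 0 then 0 else coeff (linear_factors A) (k - 1))"
  by (cases k) (simp_all add: linear_factors_insert[OF assms] mult_pCons_left)

lemma poly_linear_factors: "poly (linear_factors A) x = (\<Prod>y\<in>A. x - y)"
  by (simp add: linear_factors_def poly_prod)

lemma degree_linear_factors: "finite A \<Longrightarrow> degree (linear_factors A) = card A"
  by (simp add: linear_factors_def degree_prod_eq_sum_degree)

lemma lead_coeff_linear_factors: "lead_coeff (linear_factors A) = 1"
  by (simp add: linear_factors_def lead_coeff_prod)

lemma linear_factors_dvd:
  assumes "finite A" "\<forall>x\<in>A. poly p x = 0"
  shows "linear_factors A dvd p"
  using assms
proof (induction A arbitrary: p rule: finite_induct)
  case empty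
  then show ?case by (simp add: linear_factors_def)
next
  case (insert x A)
  then have "linear_factors A dvd p" by simp
  then obtain h where h: "p = linear_factors A * h" by (elim dvdE)
  have "poly (linear_factors A) x \<noteq> 0" using insert by (simp add: poly_linear_factors)
  then have "poly h x = 0" using insert h by simp
  then obtain g where g: "h = [:-x, 1:] * g" by (auto simp: poly_eq_0_iff_dvd elim: dvdE)
  have "p = linear_factors (insert x A) * g"
    unfolding h g linear_factors_insert[OF insert.hyps] by (simp only: mult_ac)
  then show ?case by (rule dvdI)
qed

lemma coeff_linear_factors_neg_roots_pos:
  assumes "finite A" "A \<subseteq> {x. x < 0}" "k \<le> card A"
  shows "coeff (linear_factors A) k > 0"
  using assms
proof (induction A arbitrary: k rule: finite_induct)
  case empty
  then show ?case by (simp add: linear_factors_def)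
next
  case (insert x A)
  let ?s = "coeff (linear_factors A)"
  have nonneg: "?s j \<ge> 0" for j
    using insert.IH[of j] insert.prems degree_linear_factors[OF insert.hyps(1)]
    by (cases "j \<le> card A") (auto simp: coeff_eq_0)
  show ?case
  proof (cases k)
    case 0
    then show ?thesis using insert insert.IH[of 0]
      by (simp add: coeff_linear_factors_insert mult_neg_pos)
  next
    case (Suc j)
    then have "?s j > 0" using insert by simp
    moreover have "(-x) * ?s k \<ge> 0" using insert.prems nonneg[of k] by (simp add: mult_nonpos_nonneg)
    ultimately show ?thesis using Suc insert.hyps by (simp add: coeff_linear_factors_insert)
  qed
qed

lemma coeff_linear_factors_nonneg:
  assumes "finite A" "A \<subseteq> {x. x < 0}"
  shows "coeff (linear_factors A) k \<ge> 0"
  using coeff_linear_factors_neg_roots_pos[OF assms, of k] degree_linear_factors[OF assms(1)]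
  by (cases "k \<le> card A") (auto simp: coeff_eq_0)

lemma coeff_linear_factors_small_roots_ratio:
  fixes d :: real
  assumes "finite A" "A \<subseteq> {x. -d \<le> x \<and> x < 0}" "k < card A"
  shows "coeff (linear_factors A) k \<le> card A * d * coeff (linear_factors A) (Suc k)"
  using assms
proof (induction A arbitrary: k rule: finite_induct)
  case empty
  then show ?case by simp
next
  case (insert x A)
  let ?s = "coeff (linear_factors A)" and ?t = "coeff (linear_factors (insert x A))"
  have neg: "insert x A \<subseteq> {x. x < 0}" "A \<subseteq> {x. x < 0}" using insert.prems by auto
  have fin: "finite (insert x A)" using insert.hyps by simp
  note nonneg = coeff_linear_factors_nonneg[OF insert.hyps(1) neg(2)]
    coeff_linear_factors_nonneg[OF fin neg(1)]
  have x: "-x \<le> d" "0 < -x" using insert.prems by auto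
  have "?t k \<le> Suc (card A) * d * ?s k"
  proof (cases k)
    case 0
    have "(-x) * ?s 0 \<le> d * ?s 0" using x nonneg by (intro mult_right_mono) auto
    also have "\<dots> \<le> Suc (card A) * d * ?s 0" using x nonneg by (intro mult_right_mono) auto
    finally show ?thesis using 0 insert.hyps by (simp add: coeff_linear_factors_insert)
  next
    case (Suc j)
    have "?s j \<le> card A * d * ?s k" using insert Suc by auto
    moreover have "(-x) * ?s k \<le> d * ?s k" using x nonneg by (intro mult_right_mono) auto
    ultimately show ?thesis using Suc insert.hyps by (simp add: coeff_linear_factors_insert algebra_simps)
  qed
  also have "\<dots> \<le> Suc (card A) * d * ?t (Suc k)"
    using x nonneg(1)[of "Suc k"] insert.hyps
    by (intro mult_left_mono) (auto simp: coeff_linear_factors_insert mult_nonpos_nonneg)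
  finally show ?case using insert.hyps by simp
qed

lemma newton_step_0_2:
  fixes n r a b c :: real
  assumes "n > 0" "r > 0" "(n - 1) * b\<^sup>2 \<ge> 2 * n * a * c"
  shows "n * (r * b + a)\<^sup>2 \<ge> 2 * (n + 1) * (r * a) * (r * c + b)"
proof -
  have "n * (n * (r * b + a)\<^sup>2 - 2 * (n + 1) * (r * a) * (r * c + b))
     = (n * a - r * b)\<^sup>2 + (n + 1) * r\<^sup>2 * ((n - 1) * b\<^sup>2 - 2 * n * a * c)"
    by (simp add: algebra_simps power2_eq_square)
  also have "\<dots> \<ge> 0" using assms by (intro add_nonneg_nonneg mult_nonneg_nonneg) auto
  finally show ?thesis using assms(1) by (simp add: zero_le_mult_iff)
qed

lemma newton_step_0_3:
  fixes a b c e r :: real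
  assumes "r > 0" "a \<ge> 0" "b \<ge> 0" "b * c \<ge> 10/3 * a * e" "b\<^sup>2 \<ge> 7/3 * a * c"
  shows "(r * b + a) * (r * c + b) \<ge> 10/3 * (r * a) * (r * e + c)"
proof -
  have "(r * b + a) * (r * c + b) - 10/3 * (r * a) * (r * e + c)
      = a * b + r * (b\<^sup>2 - 7/3 * a * c) + r\<^sup>2 * (b * c - 10/3 * a * e)"
    by (simp add: algebra_simps power2_eq_square)
  also have "\<dots> \<ge> 0" using assms by (intro add_nonneg_nonneg mult_nonneg_nonneg) auto
  finally show ?thesis by simp
qed

lemma newton_step_0_4:
  fixes a b c e f r :: real
  assumes "r > 0" "a \<ge> 0" "c \<ge> 0" "b * e \<ge> 13/3 * a * f" "b * c \<ge> 10/3 * a * e"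
  shows "(r * b + a) * (r * e + c) \<ge> 13/3 * (r * a) * (r * f + e)"
proof -
  have "(r * b + a) * (r * e + c) - 13/3 * (r * a) * (r * f + e)
      = a * c + r * (b * c - 10/3 * a * e) + r\<^sup>2 * (b * e - 13/3 * a * f)"
    by (simp add: algebra_simps power2_eq_square)
  also have "\<dots> \<ge> 0" using assms by (intro add_nonneg_nonneg mult_nonneg_nonneg) auto
  finally show ?thesis by simp
qed

(* Weakened Newton inequalities, with constants chosen so that the chain survives multiplication
   by x + r, r > 0, as long as the degree stays at most 9. *)
definition newton_chain :: "nat \<Rightarrow> (nat \<Rightarrow> real) \<Rightarrow> bool" where
  "newton_chain n s \<longleftrightarrow> (real n - 1) * (s 1)\<^sup>2 \<ge> 2 * n * s 0 * s 2
     \<and> (n \<le> 8 \<longrightarrow> s 1 * s 2 \<ge> 10/3 * s 0 * s 3)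
     \<and> (n \<le> 9 \<longrightarrow> s 1 * s 3 \<ge> 13/3 * s 0 * s 4)"

lemma newton_chain_weak_0_2:
  fixes s :: "nat \<Rightarrow> real"
  assumes "newton_chain n s" "n \<le> 7" "\<forall>k. s k \<ge> 0" "\<forall>k>n. s k = 0"
  shows "(s 1)\<^sup>2 \<ge> 7/3 * s 0 * s 2"
proof (cases "n \<ge> 2")
  case True
  have "7 * (real n - 1) * (s 0 * s 2) \<le> 6 * n * (s 0 * s 2)"
    using assms(2,3) by (intro mult_right_mono) auto
  also have "\<dots> \<le> 3 * ((real n - 1) * (s 1)\<^sup>2)"
    using assms(1) by (simp add: newton_chain_def algebra_simps)
  finally have "(real n - 1) * (7 * (s 0 * s 2)) \<le> (real n - 1) * (3 * (s 1)\<^sup>2)"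
    by (simp add: algebra_simps)
  then show ?thesis using True by (simp add: mult_le_cancel_left_pos)
next
  case False
  then consider "n = 0" | "n = 1" by linarith
  then have "s 0 * s 2 = 0"
  proof cases
    case 1
    then show ?thesis using assms(4) by simp
  next
    case 2
    then have "s 0 * s 2 \<le> 0" using assms(1) by (simp add: newton_chain_def)
    moreover have "s 0 * s 2 \<ge> 0" using assms(3) by simp
    ultimately show ?thesis by linarith
  qed
  then have "7/3 * s 0 * s 2 = 0" by (simp add: mult.assoc)
  then show ?thesis using zero_le_power2[of "s 1"] by linarith
qed

lemma newton_chain_step:
  fixes s :: "nat \<Rightarrow> real"
  assumes chain: "newton_chain n s" and nonneg: "\<forall>k. s k \<ge> 0" and deg: "\<forall>k>n. s k = 0"
    and r: "r > 0"
  shows "newton_chain (Suc n) (\<lambda>k. r * s k + (if k = 0 then 0 else s (k - 1)))"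
proof -
  have c02: "real n * (r * s 1 + s 0)\<^sup>2 \<ge> 2 * (real n + 1) * (r * s 0) * (r * s 2 + s 1)"
  proof (cases "n = 0")
    case True
    then show ?thesis using deg by simp
  next
    case False
    then show ?thesis
      using newton_step_0_2[where n="real n" and r=r and a="s 0" and b="s 1" and c="s 2"] chain r
      by (simp add: newton_chain_def)
  qed
  have c03: "(r * s 1 + s 0) * (r * s 2 + s 1) \<ge> 10/3 * (r * s 0) * (r * s 3 + s 2)" if "n \<le> 7"
    using newton_step_0_3[OF r] newton_chain_weak_0_2[OF chain that nonneg deg] nonneg chain that
    by (simp add: newton_chain_def)
  have c04: "(r * s 1 + s 0) * (r * s 3 + s 2) \<ge> 13/3 * (r * s 0) * (r * s 4 + s 3)" if "n \<le> 8"
    using newton_step_0_4[OF r] nonneg chain that by (simp add: newton_chain_def)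
  show ?thesis
    unfolding newton_chain_def using c02 c03 c04 by (simp add: numeral_eq_Suc algebra_simps)
qed

lemma newton_chain_linear_factors:
  assumes "finite A" "A \<subseteq> {x. x < 0}"
  shows "newton_chain (card A) (coeff (linear_factors A))"
  using assms
proof (induction A rule: finite_induct)
  case empty
  then show ?case by (simp add: newton_chain_def linear_factors_def)
next
  case (insert x A)
  let ?s = "coeff (linear_factors A)"
  have "A \<subseteq> {x. x < 0}" "-x > 0" using insert.prems by auto
  moreover have "\<forall>k>card A. ?s k = 0"
    using degree_linear_factors[OF insert.hyps(1)] by (auto simp: coeff_eq_0)
  ultimately have "newton_chain (Suc (card A)) (\<lambda>k. (-x) * ?s k + (if k = 0 then 0 else ?s (k - 1)))"
    using insert.IH coeff_linear_factors_nonneg[OF insert.hyps(1)] by (intro newton_chain_step) auto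
  moreover have "coeff (linear_factors (insert x A))
      = (\<lambda>k. (-x) * ?s k + (if k = 0 then 0 else ?s (k - 1)))"
    using insert.hyps by (intro ext coeff_linear_factors_insert)
  ultimately show ?case using insert.hyps by simp
qed

section \<open>Points of T have a coefficient that is not tiny\<close>

lemma monic_quadratic_without_real_roots:
  fixes Q :: "real poly"
  assumes "degree Q = 2" "lead_coeff Q = 1" "\<And>y. poly Q y \<noteq> 0"
  obtains p q where "Q = [:q, p, 1:]" "p\<^sup>2 < 4 * q"
proof -
  define p q where "p = coeff Q 1" and "q = coeff Q 0"
  have Q: "Q = [:q, p, 1:]"
  proof (rule poly_eqI)
    fix k
    show "coeff Q k = coeff [:q, p, 1:] k"
      using assms(1,2) coeff_eq_0[of Q k] unfolding p_def q_def
      by (cases k; cases "k - 1"; cases "k - 2") (auto simp: numeral_2_eq_2)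
  qed
  have "p\<^sup>2 < 4 * q"
  proof (rule ccontr)
    assume "\<not> p\<^sup>2 < 4 * q"
    then have "(sqrt (p\<^sup>2 - 4 * q))\<^sup>2 = p\<^sup>2 - 4 * q" by simp
    then have "poly Q ((- p + sqrt (p\<^sup>2 - 4 * q)) / 2) = 0"
      unfolding Q by (simp add: field_simps power2_eq_square)
    then show False using assms(3) by blast
  qed
  with Q show ?thesis using that by blast
qed

lemma Tset_factorization:
  assumes "a \<in> Tset"
  defines "N \<equiv> {x. x < 0 \<and> poly (Ppoly a) x = 0}"
  obtains \<rho> p q where "\<rho> > 0" "poly (Ppoly a) \<rho> = 0" "finite N" "card N = 8" "p\<^sup>2 < 4 * q"
    "Ppoly a = [:-\<rho>, 1:] * [:q, p, 1:] * linear_factors N"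
proof -
  let ?P = "Ppoly a"
  note T = assms(1)[unfolded Tset_def mem_Collect_eq]
  obtain \<rho> where \<rho>: "{x. x > 0 \<and> poly ?P x = 0} = {\<rho>}"
    using T card_1_singletonE by blast
  then have \<rho>_root: "\<rho> > 0" "poly ?P \<rho> = 0" by auto
  have cardN: "card N = 8" using T unfolding N_def by blast
  then have finN: "finite N" by (metis card.infinite zero_neq_numeral)
  have \<rho>N: "\<rho> \<notin> N" using \<rho>_root unfolding N_def by simp
  define R where "R = {x. poly ?P x = 0}"
  have "poly ?P 0 \<noteq> 0" using T by (simp add: poly_Ppoly)
  then have "x \<in> R \<longleftrightarrow> x = \<rho> \<or> x \<in> N" for x
    using \<rho> \<rho>_root unfolding R_def N_def by (cases x "0::real" rule: linorder_cases) auto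
  then have R: "R = insert \<rho> N" by auto
  have finR: "finite R" using finN R by simp
  obtain Q where PQ: "?P = linear_factors R * Q"
    using linear_factors_dvd[OF finR, of ?P] unfolding R_def by (auto elim: dvdE)
  have Q: "Q \<noteq> 0" using PQ Ppoly_nonzero by auto
  have "degree (linear_factors R) = 9"
    using degree_linear_factors[OF finR] R finN \<rho>N cardN by simp
  moreover have LR: "linear_factors R \<noteq> 0" using lead_coeff_linear_factors[of R] by auto
  ultimately have "degree Q = 2"
    using PQ degree_Ppoly[of a] Q by (simp add: degree_mult_eq)
  moreover have "lead_coeff Q = 1"
    using PQ lead_coeff_Ppoly[of a] by (simp add: lead_coeff_mult lead_coeff_linear_factors)
  moreover have "poly Q y \<noteq> 0" for y
  proof
    assume Qy: "poly Q y = 0"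
    then have "poly ?P y = 0" by (subst PQ) simp
    then have "y \<in> R" unfolding R_def by simp
    then have "poly (linear_factors R) y = 0"
      using finR by (auto simp: poly_linear_factors)
    then have "order y (linear_factors R) \<noteq> 0"
      using order_root LR by blast
    moreover have "order y Q \<noteq> 0" using Qy Q order_root by blast
    moreover have "order y ?P = order y (linear_factors R) + order y Q"
      using PQ Ppoly_nonzero order_mult by metis
    ultimately show False using T \<open>y \<in> R\<close> unfolding R_def by auto
  qed
  ultimately obtain p q where pq: "Q = [:q, p, 1:]" "p\<^sup>2 < 4 * q"
    using monic_quadratic_without_real_roots[of Q] by blast
  have "linear_factors R = [:-\<rho>, 1:] * linear_factors N"
    using R finN \<rho>N by (simp add: linear_factors_insert)
  then have "?P = [:-\<rho>, 1:] * [:q, p, 1:] * linear_factors N"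
    unfolding PQ pq by (simp only: mult_ac)
  with that \<rho>_root finN cardN pq(2) show ?thesis by blast
qed

lemma Ppoly_root_estimate:
  fixes x e :: real
  assumes "\<forall>j<10. \<bar>coef10 a j\<bar> \<le> e" "poly (Ppoly a) x = 0"
  shows "\<bar>x ^ 10 * (x - 1)\<bar> \<le> e * (\<Sum>j<10. \<bar>x\<bar> ^ j)"
proof -
  have "x ^ 10 * (x - 1) = - (\<Sum>j<10. coef10 a j * x ^ j)"
    using assms(2) by (simp add: poly_Ppoly algebra_simps eval_nat_numeral)
  then have "\<bar>x ^ 10 * (x - 1)\<bar> \<le> (\<Sum>j<10. \<bar>coef10 a j * x ^ j\<bar>)"
    by (simp only: abs_minus_cancel sum_abs)
  also have "\<dots> \<le> (\<Sum>j<10. e * \<bar>x\<bar> ^ j)"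
    using assms(1) by (intro sum_mono) (auto simp: abs_mult power_abs intro: mult_right_mono)
  finally show ?thesis by (simp add: sum_distrib_left)
qed

lemma Ppoly_root_bounds:
  fixes x e :: real
  assumes coeffs: "\<forall>j<10. \<bar>coef10 a j\<bar> \<le> e" and root: "poly (Ppoly a) x = 0"
    and small: "e \<le> 1/100"
  shows "x < 0 \<Longrightarrow> (-x) ^ 10 \<le> 10 * e" and "x > 1 \<Longrightarrow> x - 1 \<le> 10 * e"
proof -
  have "\<bar>coef10 a 0\<bar> \<le> e" using coeffs by simp
  then have e: "0 \<le> e" by linarith
  note est = Ppoly_root_estimate[OF coeffs root]
  have large: "\<bar>x\<bar> * \<bar>x - 1\<bar> \<le> 10 * e" if x: "\<bar>x\<bar> \<ge> 1"
  proof -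
    have "\<bar>x\<bar> ^ 9 * (\<bar>x\<bar> * \<bar>x - 1\<bar>) = \<bar>x ^ 10 * (x - 1)\<bar>"
      unfolding abs_mult power_abs mult.assoc[symmetric] power_Suc2[symmetric] by simp
    also have "\<dots> \<le> e * (\<Sum>j<10. \<bar>x\<bar> ^ j)" by (rule est)
    also have "\<dots> \<le> e * (\<Sum>j<(10::nat). \<bar>x\<bar> ^ 9)"
      using x e by (intro mult_left_mono sum_mono) (auto simp: power_increasing)
    finally have "\<bar>x\<bar> ^ 9 * (\<bar>x\<bar> * \<bar>x - 1\<bar>) \<le> \<bar>x\<bar> ^ 9 * (10 * e)"
      by (simp add: mult_ac)
    then show ?thesis using x by (simp add: mult_le_cancel_left_pos)
  qed
  show "(-x) ^ 10 \<le> 10 * e" if x: "x < 0"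
  proof (cases "\<bar>x\<bar> \<ge> 1")
    case True
    then have "1 * 1 \<le> \<bar>x\<bar> * \<bar>x - 1\<bar>" using x by (intro mult_mono) auto
    then show ?thesis using large[OF True] small by simp
  next
    case False
    have "\<bar>x ^ 10 * (x - 1)\<bar> \<le> e * (\<Sum>j<10. \<bar>x\<bar> ^ j)" by (rule est)
    also have "\<dots> \<le> e * (\<Sum>j<(10::nat). 1)"
      using False e by (intro mult_left_mono sum_mono) (auto simp: power_le_one)
    finally have "\<bar>x ^ 10 * (x - 1)\<bar> \<le> 10 * e" by simp
    moreover have "(-x) ^ 10 * 1 \<le> \<bar>x ^ 10 * (x - 1)\<bar>"
      using x by (simp add: abs_mult power_abs mult_left_mono)
    ultimately show ?thesis by simp
  qed
  show "x - 1 \<le> 10 * e" if x: "x > 1"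
  proof -
    have "x - 1 \<le> x * (x - 1)" using mult_right_mono[of 1 x "x - 1"] x by simp
    moreover have "x * (x - 1) \<le> 10 * e" using large x by simp
    ultimately show ?thesis by linarith
  qed
qed

lemma small_factor_parameter_bounds:
  fixes \<rho> p q s6 s7 a9 e \<delta> :: real
  assumes e: "e = 1/10^61" and \<delta>: "\<delta> = 1/10^6"
    and pos: "\<rho> > 0" "s6 > 0" "s7 > 0" and s7: "s7 \<le> 8 * \<delta>"
    and c10: "-1 = (p - \<rho>) + s7" and c9: "a9 = (q - \<rho> * p) + (p - \<rho>) * s7 + s6"
    and a9: "\<bar>a9\<bar> \<le> e" and \<rho>1: "\<rho> > 1 \<Longrightarrow> \<rho> - 1 \<le> 10 * e" and disc: "p\<^sup>2 < 4 * q"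
  shows "q \<le> 10 * \<delta>" and "\<bar>p\<bar> < 1/100" and "99/100 \<le> \<rho>" and "\<rho> \<le> 101/100"
proof -
  have "(1 + s7) * s7 \<le> (1 + 8 * \<delta>) * (8 * \<delta>)"
    using s7 pos by (intro mult_mono) (auto simp: \<delta>)
  then have "(1 + s7) * s7 \<le> 9 * \<delta>" by (simp add: \<delta>)
  moreover have "q = a9 - s6 + (1 + s7) * s7 + \<rho> * p"
    using c9 c10 by (simp add: algebra_simps)
  ultimately have q: "q \<le> e + 9 * \<delta> + \<rho> * p" using a9 pos by linarith
  show q_bound: "q \<le> 10 * \<delta>"
  proof (cases "p \<le> 0")
    case True
    then have "\<rho> * p \<le> 0" using pos by (simp add: mult_nonneg_nonpos)
    then show ?thesis using q by (simp add: e \<delta>)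
  next
    case False
    then have "\<rho> - 1 \<le> 10 * e" using \<rho>1 c10 pos by simp
    then have "p \<le> 10 * e" "\<rho> \<le> 2" using c10 pos by (auto simp: e)
    then have "\<rho> * p \<le> 2 * (10 * e)" using False pos by (intro mult_mono) auto
    then show ?thesis using q by (simp add: e \<delta>)
  qed
  have "\<bar>p\<bar>\<^sup>2 < (1/100)\<^sup>2" using disc q_bound by (simp add: \<delta> power2_eq_square)
  then show p: "\<bar>p\<bar> < 1/100" by (rule power_less_imp_less_base) simp
  show "99/100 \<le> \<rho>" using c10 pos p by linarith
  show "\<rho> \<le> 101/100" using \<rho>1 by (cases "\<rho> > 1") (auto simp: e)
qed

(* With A = q - rho p and B = rho - p - 8 delta the two positivity conditions give
   rho q s_1 < A s_0 and B s_3 < A s_4; multiplying and using the Newton-type bound yields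
   13/3 rho q B < A^2 < q (q - 2 rho p + 4 rho^2), impossible for rho near 1 and p, q near 0. *)
lemma coefficients_1_5_not_both_positive:
  fixes \<rho> p q \<delta> :: real and s :: "nat \<Rightarrow> real"
  assumes \<delta>: "\<delta> = 1/10^6" and \<rho>: "99/100 \<le> \<rho>" "\<rho> \<le> 101/100" and p: "\<bar>p\<bar> < 1/100"
    and disc: "p\<^sup>2 < 4 * q" and q: "q \<le> 10 * \<delta>"
    and s_pos: "\<forall>k\<le>5. s k > 0" and s2: "s 2 \<le> 8 * \<delta> * s 3"
    and newton: "13/3 * s 0 * s 4 \<le> s 1 * s 3"
    and a1: "0 < - \<rho> * q * s 1 + (q - \<rho> * p) * s 0"
    and a5: "0 < - \<rho> * q * s 5 + (q - \<rho> * p) * s 4 + (p - \<rho>) * s 3 + s 2"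
  shows False
proof -
  define A where "A = q - \<rho> * p"
  define B where "B = \<rho> - p - 8 * \<delta>"
  have q_pos: "q > 0" using disc by (smt (verit) zero_le_power2)
  have "s 0 > 0" "s 1 > 0" "s 3 > 0" "s 4 > 0" "s 5 > 0" using s_pos by auto
  note s = this
  have B: "B > 0" using \<rho> p by (simp add: B_def \<delta> abs_less_iff)
  have \<rho>q: "\<rho> * q > 0" using \<rho> q_pos by simp
  have i1: "\<rho> * q * s 1 < A * s 0" using a1 by (simp add: A_def algebra_simps)
  then have "A * s 0 > 0" using \<rho>q s by (smt (verit) mult_pos_pos)
  then have A: "A > 0" using s by (simp add: zero_less_mult_iff)
  have i5: "B * s 3 < A * s 4"
    using a5 s2 mult_pos_pos[OF \<rho>q s(5)] by (simp add: A_def B_def algebra_simps)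
  have "(\<rho> * q * B) * (13/3 * s 0 * s 4) \<le> (\<rho> * q * B) * (s 1 * s 3)"
    using newton \<rho>q B by (intro mult_left_mono) auto
  also have "\<dots> = (\<rho> * q * s 1) * (B * s 3)" by (simp add: mult_ac)
  also have "\<dots> < (A * s 0) * (A * s 4)"
    by (rule mult_strict_mono[OF i1 i5]) (use A B s in auto)
  finally have "(s 0 * s 4) * (13/3 * \<rho> * q * B) < (s 0 * s 4) * A\<^sup>2"
    by (simp add: mult_ac power2_eq_square)
  then have "13/3 * \<rho> * q * B < A\<^sup>2" using s by (simp add: mult_less_cancel_left_pos)
  also have "A\<^sup>2 < q * (q - 2 * \<rho> * p + 4 * \<rho>\<^sup>2)"
    using mult_strict_left_mono[OF disc, of "\<rho>\<^sup>2"] \<rho>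
    by (simp add: A_def algebra_simps power2_eq_square)
  finally have "q * (13/3 * \<rho> * B) < q * (q - 2 * \<rho> * p + 4 * \<rho>\<^sup>2)" by (simp add: mult_ac)
  then have "13/3 * \<rho> * B < q - 2 * \<rho> * p + 4 * \<rho>\<^sup>2"
    using q_pos by (simp add: mult_less_cancel_left_pos)
  then have "1/3 * \<rho>\<^sup>2 < q + 7/3 * (\<rho> * p) + 104/3 * (\<delta> * \<rho>)"
    unfolding B_def power2_eq_square by argo
  moreover have "9801/10000 \<le> \<rho>\<^sup>2" using power_mono[OF \<rho>(1), of 2] by (simp add: power2_eq_square)
  moreover have "\<rho> * p \<le> 101/100 * (1/100)"
  proof (cases "p \<ge> 0")
    case True
    then show ?thesis using \<rho> p by (intro mult_mono) auto
  next
    case False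
    then have "\<rho> * p \<le> 0" using \<rho> by (simp add: mult_nonneg_nonpos)
    then show ?thesis by simp
  qed
  moreover have "\<delta> * \<rho> \<le> \<delta> * (101/100)" using \<rho> by (intro mult_left_mono) (auto simp: \<delta>)
  ultimately show False using q by (simp add: \<delta>)
qed

lemma coeff_cubic_mult:
  fixes S :: "'a :: comm_semiring_1 poly"
  shows "coeff ([:c0, c1, c2, c3:] * S) (k + 3)
           = c0 * coeff S (k + 3) + c1 * coeff S (k + 2) + c2 * coeff S (k + 1) + c3 * coeff S k"
    and "coeff ([:c0, c1, c2, c3:] * S) 1 = c0 * coeff S 1 + c1 * coeff S 0"
  by (simp_all add: mult_pCons_left numeral_3_eq_3 numeral_2_eq_2 add.assoc)

lemma Tset_coefficients_not_all_small:
  assumes T: "a \<in> Tset"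
  shows "\<exists>j<10. \<bar>coef10 a j\<bar> > 1/10^61"
proof (rule ccontr)
  define e \<delta> :: real where "e = 1/10^61" and "\<delta> = 1/10^6"
  define N where "N = {x. x < 0 \<and> poly (Ppoly a) x = 0}"
  assume "\<not> ?thesis"
  then have small: "\<forall>j<10. \<bar>coef10 a j\<bar> \<le> e" unfolding e_def using not_less by blast
  obtain \<rho> p q where \<rho>: "\<rho> > 0" "poly (Ppoly a) \<rho> = 0" and N: "finite N" "card N = 8"
    and disc: "p\<^sup>2 < 4 * q" and P: "Ppoly a = [:-\<rho>, 1:] * [:q, p, 1:] * linear_factors N"
    using Tset_factorization[OF T] unfolding N_def by blast
  have N_small: "N \<subseteq> {x. -\<delta> \<le> x \<and> x < 0}"
  proof
    fix x assume "x \<in> N"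
    then have x: "x < 0" "poly (Ppoly a) x = 0" by (auto simp: N_def)
    have "(-x) ^ 10 \<le> \<delta> ^ 10"
      using Ppoly_root_bounds(1)[OF small x(2) _ x(1)] by (simp add: e_def \<delta>_def power_divide)
    then have "-x \<le> \<delta>" using power_le_imp_le_base[of "-x" 9 \<delta>] by (simp add: \<delta>_def)
    then show "x \<in> {x. -\<delta> \<le> x \<and> x < 0}" using x by simp
  qed
  then have N_neg: "N \<subseteq> {x. x < 0}" by auto
  define s where "s = coeff (linear_factors N)"
  have s_pos: "\<forall>k\<le>8. s k > 0"
    using coeff_linear_factors_neg_roots_pos[OF N(1) N_neg] N(2) by (simp add: s_def)
  have s_ratio: "\<forall>k<8. s k \<le> 8 * \<delta> * s (Suc k)"
    using coeff_linear_factors_small_roots_ratio[OF N(1) N_small] N(2) by (simp add: s_def)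
  have newton: "13/3 * s 0 * s 4 \<le> s 1 * s 3"
    using newton_chain_linear_factors[OF N(1) N_neg] N(2) by (simp add: s_def newton_chain_def)
  have s_top: "s 8 = 1" "s 9 = 0" "s 10 = 0"
    using degree_linear_factors[OF N(1)] lead_coeff_linear_factors[of N] N(2)
    by (simp_all add: s_def coeff_eq_0)
  have "Ppoly a = [:-\<rho> * q, q - \<rho> * p, p - \<rho>, 1:] * linear_factors N"
    unfolding P by (simp add: algebra_simps)
  note c = coeff_cubic_mult[of "-\<rho> * q" "q - \<rho> * p" "p - \<rho>" 1 "linear_factors N",
      folded this s_def, unfolded coeff_Ppoly]
  have c10: "-1 = (p - \<rho>) + s 7" using c(1)[of 7] s_top by simp
  have c9: "coef10 a 9 = (q - \<rho> * p) + (p - \<rho>) * s 7 + s 6" using c(1)[of 6] s_top by simp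
  have "coef10 a 1 > 0" "coef10 a 5 > 0" using T by (auto simp: Tset_def)
  then have a1: "0 < - \<rho> * q * s 1 + (q - \<rho> * p) * s 0"
    and a5: "0 < - \<rho> * q * s 5 + (q - \<rho> * p) * s 4 + (p - \<rho>) * s 3 + s 2"
    using c(2) c(1)[of 2] by simp_all
  have s67: "s 6 > 0" "s 7 > 0" "s 7 \<le> 8 * \<delta>"
    using s_pos s_ratio[rule_format, of 7] s_top by simp_all
  have \<rho>1: "\<rho> - 1 \<le> 10 * e" if "\<rho> > 1"
    using Ppoly_root_bounds(2)[OF small \<rho>(2) _ that] by (simp add: e_def)
  have "\<bar>coef10 a 9\<bar> \<le> e" using small by simp
  note bounds = small_factor_parameter_bounds[OF e_def \<delta>_def \<rho>(1) s67 c10 c9 this \<rho>1 disc]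
  have "\<forall>k\<le>5. s k > 0" using s_pos by simp
  moreover have "s 2 \<le> 8 * \<delta> * s 3" using s_ratio[rule_format, of 2] by (simp add: numeral_eq_Suc)
  ultimately show False
    using coefficients_1_5_not_both_positive[OF \<delta>_def bounds(3,4,2) disc bounds(1) _ _ newton a1 a5]
    by blast
qed

lemma closure_Tset_coefficient_nonzero:
  assumes "a \<in> closure Tset"
  shows "\<exists>j<10. coef10 a j \<noteq> 0"
proof -
  have "(1::real) / 10^61 > 0" by simp
  then obtain b where b: "b \<in> Tset" "dist b a < 1/10^61"
    using assms unfolding closure_approachable by blast
  obtain j where j: "j < 10" "\<bar>coef10 b j\<bar> > 1/10^61"
    using Tset_coefficients_not_all_small[OF b(1)] by blast
  have "\<bar>coef10 b j - coef10 a j\<bar> \<le> dist b a"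
    using component_le_norm_cart[of "b - a" "of_nat j"] by (simp add: coef10_def dist_norm)
  then show ?thesis using b(2) j by auto
qed

theorem lemma9:
  fixes \<Gamma> :: "(real^10) set"
  assumes "Tset \<noteq> {}"
    and "\<Gamma> \<in> components Tset"
  shows "\<forall>p \<in> {Ppoly a | a. a \<in> closure \<Gamma> \<and> all_roots_real (Ppoly a)}.
           card {x::real. poly p x = 0} \<noteq> 2"
proof
  fix p assume "p \<in> {Ppoly a | a. a \<in> closure \<Gamma> \<and> all_roots_real (Ppoly a)}"
  then obtain a where p: "p = Ppoly a" and a: "a \<in> closure \<Gamma>" and real: "all_roots_real (Ppoly a)"
    by blast
  have closure_T: "a \<in> closure Tset"
    using a closure_mono[OF in_components_subset[OF assms(2)]] by blast
  show "card {x::real. poly p x = 0} \<noteq> 2"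
  proof
    assume "card {x::real. poly p x = 0} = 2"
    then obtain r s m n where mn: "1 \<le> m" "1 \<le> n" "m + n = 11"
      and two_roots: "Ppoly a = [:-r, 1:] ^ m * [:-s, 1:] ^ n"
      using all_roots_real_two_roots[OF lead_coeff_Ppoly real] unfolding p degree_Ppoly by metis
    have "Ppoly a = monom 1 11 - monom 1 10"
      using two_root_poly_boundary_sign_pattern[OF mn(3,1,2)] closure_Tset_boundary_sign_pattern[OF closure_T]
      unfolding two_roots by blast
    then have "coef10 a j = 0" if "j < 10" for j
      using coeff_Ppoly[of a j] that by (simp add: coeff_monom)
    then show False using closure_Tset_coefficient_nonzero[OF closure_T] by blast
  qed
qed

end
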